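(* Let $n$ elements be grouped into $k$ (possibly overlapping) clusters $\mathcal{N}_1,\dots,\mathcal{N}_k\subseteq[n]$, each element belonging to at least one and at most $\Delta$ clusters. Suppose a noiseless quantized oracle, queried with $(i,j)$, returns $1$ if $i$ and $j$ belong to a common cluster and $0$ otherwise. Assume that for every cluster $i\in[k]$, $\left|\mathcal{N}_i\setminus\bigcup_{j\neq i}\mathcal{N}_j\right|>\alpha n$ for some $\alpha>0$. Let $S$ have size with $\alpha|S|=\log k+\log n$. Then the following algorithm recovers the clusters using $\binom{|S|}{2}+|S|\cdot(n-|S|)$ queries (with high probability over the random choice of $S$): choose $S\subseteq[n]$ uniformly at random and query all pairs in $S$; form the graph on vertex set $S$ with an edge $\{i,j\}$ iff the oracle returns $1$; construct maximal cliques of this graph covering all its edges, each maximal clique forming a cluster; query each element outside $S$ with all elements of $S$ and assign it to every cluster all of whose elements it tests positive with.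
   Context: No statistical assumptions are made on the clusters; the algorithm does not need to know $\Delta$. *)

theory Defs
  imports "HOL-Probability.Probability"
begin

(* Elements are 0..<n, clusters are N 0, ..., N (k-1). *)

definition same_cluster :: "(nat \<Rightarrow> nat set) \<Rightarrow> nat \<Rightarrow> nat \<Rightarrow> nat \<Rightarrow> bool" where
  "same_cluster N k i j \<longleftrightarrow> (\<exists>l<k. i \<in> N l \<and> j \<in> N l)"

definition queries :: "nat \<Rightarrow> nat set \<Rightarrow> nat set set" where
  "queries n S = {{i, j} | i j. i \<in> S \<and> j \<in> S \<and> i \<noteq> j}
                 \<union> {{i, j} | i j. i \<in> S \<and> j \<in> {0..<n} - S}"

definition is_clique :: "(nat \<Rightarrow> nat \<Rightarrow> bool) \<Rightarrow> nat set \<Rightarrow> nat set \<Rightarrow> bool" where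
  "is_clique Q S C \<longleftrightarrow> C \<subseteq> S \<and> (\<forall>x\<in>C. \<forall>y\<in>C. x \<noteq> y \<longrightarrow> Q x y)"

definition is_maximal_clique :: "(nat \<Rightarrow> nat \<Rightarrow> bool) \<Rightarrow> nat set \<Rightarrow> nat set \<Rightarrow> bool" where
  "is_maximal_clique Q S C \<longleftrightarrow> is_clique Q S C \<and> C \<noteq> {} \<and>
     (\<forall>D. is_clique Q S D \<and> C \<subseteq> D \<longrightarrow> D = C)"

definition covers_graph :: "(nat \<Rightarrow> nat \<Rightarrow> bool) \<Rightarrow> nat set \<Rightarrow> nat set set \<Rightarrow> bool" where
  "covers_graph Q S F \<longleftrightarrow> (\<forall>x\<in>S. \<exists>C\<in>F. x \<in> C) \<and>
     (\<forall>x\<in>S. \<forall>y\<in>S. x \<noteq> y \<and> Q x y \<longrightarrow> (\<exists>C\<in>F. x \<in> C \<and> y \<in> C))"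

definition maximal_clique_cover :: "(nat \<Rightarrow> nat \<Rightarrow> bool) \<Rightarrow> nat set \<Rightarrow> nat set set \<Rightarrow> bool" where
  "maximal_clique_cover Q S F \<longleftrightarrow> (\<forall>C\<in>F. is_maximal_clique Q S C) \<and> covers_graph Q S F \<and>
     (\<forall>F'. F' \<subset> F \<longrightarrow> \<not> covers_graph Q S F')"

definition extend_cluster :: "(nat \<Rightarrow> nat \<Rightarrow> bool) \<Rightarrow> nat \<Rightarrow> nat set \<Rightarrow> nat set \<Rightarrow> nat set" where
  "extend_cluster Q n S C = C \<union> {x \<in> {0..<n} - S. \<forall>y\<in>C. Q x y}"

definition recovers :: "(nat \<Rightarrow> nat set) \<Rightarrow> nat \<Rightarrow> nat \<Rightarrow> nat set \<Rightarrow> bool" where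
  "recovers N k n S \<longleftrightarrow> (\<exists>F. maximal_clique_cover (same_cluster N k) S F) \<and>
     (\<forall>F. maximal_clique_cover (same_cluster N k) S F \<longrightarrow>
          extend_cluster (same_cluster N k) n S ` F = N ` {..<k})"

end

(*
  Call the elements lying in exactly one cluster the private part of that cluster.
  If the sample S contains a private element p of every cluster N i, then the sample
  graph determines the clusters: the neighbours of p are exactly N i, so every clique
  through p lies in the trace S \<inter> N i, which is therefore the unique maximal clique
  through p; as every cover must cover p, the only irredundant maximal clique cover
  consists of these traces, and an element outside S joins S \<inter> N i iff it is
  adjacent to p, i.e. iff it lies in N i.
  A uniform s-subset misses a given private part, of size > \<alpha> n, with probability
  at most (1 - \<alpha>)^s \<le> exp (- \<alpha> s) = 1 / (k n), and a union bound over the k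
  clusters bounds the failure probability by 1 / n.
*)
theory Submission
  imports Defs
begin

lemma binomial_mult_power_le:
  fixes m n s :: nat
  assumes "m \<le> n"
  shows "real (m choose s) * real n ^ s \<le> real m ^ s * real (n choose s)"
proof (induction s)
  case 0
  then show ?case by simp
next
  case (Suc s)
  have "(l choose Suc s) * Suc s = (l choose s) * (l - s)" for l :: nat
    using binomial_absorb_comp[of l s] Suc_times_binomial_eq[of "l - 1" s]
    by (cases l) (simp_all add: mult.commute)
  then have step: "real (l choose Suc s) * real (Suc s) = real (l choose s) * real (l - s)"
    for l :: nat
    by (metis of_nat_mult)
  have ratio: "real (m - s) * real n \<le> real m * real (n - s)"
    using assms by (cases "s \<le> m") (simp_all add: of_nat_diff algebra_simps mult_right_mono)
  have "real (m choose Suc s) * real n ^ Suc s * real (Suc s)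
        = (real (m choose Suc s) * real (Suc s)) * (real n ^ s * real n)"
    by (simp only: power_Suc mult_ac)
  also have "\<dots> = (real (m choose s) * real n ^ s) * (real (m - s) * real n)"
    unfolding step by (simp only: mult_ac)
  also have "\<dots> \<le> (real m ^ s * real (n choose s)) * (real m * real (n - s))"
    by (rule mult_mono[OF Suc.IH ratio]) auto
  also have "\<dots> = real m ^ Suc s * (real (n choose Suc s) * real (Suc s))"
    unfolding step by (simp only: power_Suc mult_ac)
  finally have "real (m choose Suc s) * real n ^ Suc s * real (Suc s)
      \<le> real m ^ Suc s * real (n choose Suc s) * real (Suc s)"
    by (simp only: mult.assoc)
  then show ?case by (rule mult_right_le_imp_le) simp
qed

lemma measure_pmf_ge_union_bound:
  fixes p :: "'a pmf"
  assumes "finite I"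
    and "\<And>x. x \<in> set_pmf p \<Longrightarrow> (\<And>i. i \<in> I \<Longrightarrow> x \<notin> B i) \<Longrightarrow> x \<in> A"
  shows "measure_pmf.prob p A \<ge> 1 - (\<Sum>i\<in>I. measure_pmf.prob p (B i))"
proof -
  have "1 - measure_pmf.prob p A = measure_pmf.prob p (UNIV - A)"
    using measure_pmf.prob_compl[of A p] by simp
  also have "\<dots> \<le> measure_pmf.prob p (\<Union>i\<in>I. B i)"
    using assms(2) by (intro measure_pmf.finite_measure_mono_AE
        AE_mp[OF AE_measure_pmf[of p] AE_I2]) auto
  also have "\<dots> \<le> (\<Sum>i\<in>I. measure_pmf.prob p (B i))"
    using assms(1) by (intro measure_pmf.finite_measure_subadditive_finite) auto
  finally show ?thesis by simp
qed

lemma prob_random_subset_disjoint: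
  assumes U: "finite U" and P: "P \<subseteq> U" and s: "s \<le> card U"
  shows "measure_pmf.prob (pmf_of_set {S. S \<subseteq> U \<and> card S = s}) {S. S \<inter> P = {}}
         = real ((card U - card P) choose s) / real (card U choose s)"
proof -
  let ?\<Omega> = "{S. S \<subseteq> U \<and> card S = s}"
  have "?\<Omega> \<inter> {S. S \<inter> P = {}} = {S. S \<subseteq> U - P \<and> card S = s}" by blast
  moreover have "card (U - P) = card U - card P"
    using U P by (simp add: card_Diff_subset finite_subset)
  moreover have "?\<Omega> \<noteq> {}"
    using obtain_subset_with_card_n[OF s] by blast
  ultimately show ?thesis
    using U by (simp add: measure_pmf_of_set n_subsets)
qed

lemma prob_random_subset_disjoint_le:
  fixes \<alpha> :: real
  assumes U: "finite U" and P: "P \<subseteq> U" and s: "s \<le> card U"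
    and large: "real (card P) > \<alpha> * real (card U)"
  shows "measure_pmf.prob (pmf_of_set {S. S \<subseteq> U \<and> card S = s}) {S. S \<inter> P = {}}
         \<le> exp (- \<alpha> * real s)"
proof -
  define n where "n = card U"
  define m where "m = card U - card P"
  have "card P \<le> n" using U P unfolding n_def by (simp add: card_mono)
  then have m: "real m < (1 - \<alpha>) * real n"
    using large unfolding m_def n_def by (simp add: of_nat_diff algebra_simps)
  then have "(1 - \<alpha>) * real n > 0"
    using of_nat_0_le_iff[of m] by linarith
  then have n_pos: "real n > 0" and \<alpha>: "1 - \<alpha> > 0"
    by (auto simp: zero_less_mult_iff)
  have "real (m choose s) * real n ^ s \<le> real m ^ s * real (n choose s)"
    unfolding m_def n_def by (intro binomial_mult_power_le) simp
  also have "\<dots> \<le> ((1 - \<alpha>) * real n) ^ s * real (n choose s)"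
    using m by (intro mult_right_mono power_mono) auto
  also have "\<dots> = (1 - \<alpha>) ^ s * (real (n choose s) * real n ^ s)"
    by (simp add: power_mult_distrib)
  also have "\<dots> \<le> exp (- \<alpha> * real s) * (real (n choose s) * real n ^ s)"
  proof (rule mult_right_mono)
    have "(1 - \<alpha>) ^ s \<le> exp (- \<alpha>) ^ s"
      using \<alpha> exp_ge_add_one_self[of "- \<alpha>"] by (intro power_mono) auto
    then show "(1 - \<alpha>) ^ s \<le> exp (- \<alpha> * real s)"
      by (simp add: exp_of_nat_mult[symmetric] mult.commute)
  qed simp
  finally have "real (m choose s) \<le> exp (- \<alpha> * real s) * real (n choose s)"
    using n_pos by simp
  moreover have "real (n choose s) > 0" using s unfolding n_def by simp
  ultimately show ?thesis
    using prob_random_subset_disjoint[OF U P s] unfolding m_def n_def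
    by (simp add: divide_le_eq)
qed

lemma prob_random_subset_meets_all_ge:
  fixes \<alpha> :: real
  assumes U: "finite U" and s: "s \<le> card U" and I: "finite I"
    and P: "\<And>i. i \<in> I \<Longrightarrow> P i \<subseteq> U"
    and large: "\<And>i. i \<in> I \<Longrightarrow> real (card (P i)) > \<alpha> * real (card U)"
  shows "measure_pmf.prob (pmf_of_set {S. S \<subseteq> U \<and> card S = s})
           {S. S \<subseteq> U \<and> (\<forall>i\<in>I. S \<inter> P i \<noteq> {})}
         \<ge> 1 - real (card I) * exp (- \<alpha> * real s)"
proof -
  let ?p = "pmf_of_set {S. S \<subseteq> U \<and> card S = s}"
  have "finite {S. S \<subseteq> U \<and> card S = s}"
    using U by (simp add: finite_subset[of _ "Pow U"] subset_eq)
  moreover have "{S. S \<subseteq> U \<and> card S = s} \<noteq> {}"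
    using obtain_subset_with_card_n[OF s] by blast
  ultimately have "measure_pmf.prob ?p {S. S \<subseteq> U \<and> (\<forall>i\<in>I. S \<inter> P i \<noteq> {})}
      \<ge> 1 - (\<Sum>i\<in>I. measure_pmf.prob ?p {S. S \<inter> P i = {}})"
    using I by (intro measure_pmf_ge_union_bound) auto
  moreover have "(\<Sum>i\<in>I. measure_pmf.prob ?p {S. S \<inter> P i = {}}) \<le> (\<Sum>i\<in>I. exp (- \<alpha> * real s))"
    using prob_random_subset_disjoint_le[OF U P s large] by (intro sum_mono)
  ultimately show ?thesis by simp
qed

lemma card_queries:
  assumes "S \<subseteq> {0..<n}"
  shows "card (queries n S) = (card S choose 2) + card S * (n - card S)"
proof -
  have S: "finite S" using assms finite_subset by blast
  define inner where "inner = {{i, j} | i j. i \<in> S \<and> j \<in> S \<and> i \<noteq> j}"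
  define cross where "cross = {{i, j} | i j. i \<in> S \<and> j \<in> {0..<n} - S}"
  have inner: "inner = {X. X \<subseteq> S \<and> card X = 2}"
    unfolding inner_def by (auto simp: card_2_iff)
  have cross: "cross = (\<lambda>(i, j). {i, j}) ` (S \<times> ({0..<n} - S))"
    unfolding cross_def by force
  have "inj_on (\<lambda>(i, j). {i, j}) (S \<times> ({0..<n} - S))"
    by (auto simp: inj_on_def doubleton_eq_iff)
  then have "card cross = card S * (n - card S)"
    unfolding cross using assms S by (simp add: card_image card_cartesian_product card_Diff_subset)
  moreover have "card inner = card S choose 2"
    unfolding inner using n_subsets[OF S] by simp
  moreover have "inner \<inter> cross = {}"
    unfolding inner_def cross_def by (auto simp: doubleton_eq_iff)
  moreover have "finite inner" "finite cross"
    unfolding inner cross using S by simp_all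
  ultimately show ?thesis
    unfolding queries_def inner_def[symmetric] cross_def[symmetric] by (simp add: card_Un_disjoint)
qed

definition private_part :: "(nat \<Rightarrow> nat set) \<Rightarrow> nat \<Rightarrow> nat \<Rightarrow> nat set" where
  "private_part N k i = N i - (\<Union>j\<in>{j. j < k \<and> j \<noteq> i}. N j)"

lemma same_cluster_commute: "same_cluster N k x y \<longleftrightarrow> same_cluster N k y x"
  unfolding same_cluster_def by blast

lemma same_cluster_private_iff:
  assumes "i < k" "p \<in> private_part N k i"
  shows "same_cluster N k p y \<longleftrightarrow> y \<in> N i"
  using assms unfolding same_cluster_def private_part_def by blast

lemma is_clique_cluster_trace:
  assumes "i < k"
  shows "is_clique (same_cluster N k) S (S \<inter> N i)"
  using assms unfolding is_clique_def same_cluster_def by blast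

lemma clique_through_private_subset:
  assumes "i < k" "p \<in> private_part N k i"
    and "is_clique (same_cluster N k) S D" "p \<in> D"
  shows "D \<subseteq> S \<inter> N i"
proof
  fix y assume y: "y \<in> D"
  have "D \<subseteq> S" and adjacent: "\<And>x. x \<in> D \<Longrightarrow> x \<noteq> y \<Longrightarrow> same_cluster N k x y"
    using assms(3) y unfolding is_clique_def by auto
  have "p \<in> N i" using assms(2) unfolding private_part_def by simp
  moreover have "same_cluster N k p y" if "p \<noteq> y" using adjacent[OF assms(4) that] .
  ultimately have "y \<in> N i" using same_cluster_private_iff[OF assms(1,2)] by blast
  then show "y \<in> S \<inter> N i" using \<open>D \<subseteq> S\<close> y by blast
qed

lemma maximal_clique_through_private_iff:
  assumes "i < k" "p \<in> S \<inter> private_part N k i"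
  shows "is_maximal_clique (same_cluster N k) S C \<and> p \<in> C \<longleftrightarrow> C = S \<inter> N i"
proof
  assume C: "is_maximal_clique (same_cluster N k) S C \<and> p \<in> C"
  then have "C \<subseteq> S \<inter> N i"
    using assms by (intro clique_through_private_subset) (auto simp: is_maximal_clique_def)
  then show "C = S \<inter> N i"
    using C is_clique_cluster_trace[OF assms(1)] unfolding is_maximal_clique_def by blast
next
  assume C: "C = S \<inter> N i"
  have "p \<in> C" using assms C unfolding private_part_def by blast
  moreover have "D = C" if "is_clique (same_cluster N k) S D" "C \<subseteq> D" for D
    using clique_through_private_subset[OF assms(1) _ that(1)] assms that(2) C \<open>p \<in> C\<close> by blast
  ultimately show "is_maximal_clique (same_cluster N k) S C \<and> p \<in> C"
    using is_clique_cluster_trace[OF assms(1)] C unfolding is_maximal_clique_def by blast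
qed

lemma maximal_clique_cover_iff_eq:
  assumes cliques: "\<forall>C\<in>F\<^sub>0. is_maximal_clique Q S C" and covers: "covers_graph Q S F\<^sub>0"
    and least: "\<And>F. \<forall>C\<in>F. is_maximal_clique Q S C \<Longrightarrow> covers_graph Q S F \<Longrightarrow> F\<^sub>0 \<subseteq> F"
  shows "maximal_clique_cover Q S F \<longleftrightarrow> F = F\<^sub>0"
proof
  assume "maximal_clique_cover Q S F"
  then have "\<forall>C\<in>F. is_maximal_clique Q S C" "covers_graph Q S F"
    and minimal: "\<And>F'. F' \<subset> F \<Longrightarrow> \<not> covers_graph Q S F'"
    unfolding maximal_clique_cover_def by auto
  then have "F\<^sub>0 \<subseteq> F" and "\<not> F\<^sub>0 \<subset> F"
    using least covers by auto
  then show "F = F\<^sub>0" by blast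
next
  assume F: "F = F\<^sub>0"
  have "\<not> covers_graph Q S F'" if "F' \<subset> F\<^sub>0" for F'
  proof
    assume "covers_graph Q S F'"
    moreover have "\<forall>C\<in>F'. is_maximal_clique Q S C" using cliques that by blast
    ultimately have "F\<^sub>0 \<subseteq> F'" by (rule least[rotated])
    then show False using that by blast
  qed
  then show "maximal_clique_cover Q S F"
    unfolding maximal_clique_cover_def F using cliques covers by blast
qed

lemma extend_cluster_trace:
  assumes "i < k" "N i \<subseteq> {0..<n}" "p \<in> S \<inter> private_part N k i"
  shows "extend_cluster (same_cluster N k) n S (S \<inter> N i) = N i"
proof -
  have "p \<in> S \<inter> N i" using assms(3) unfolding private_part_def by blast
  then have "x \<in> N i" if "\<forall>y\<in>S \<inter> N i. same_cluster N k x y" for x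
    using that same_cluster_private_iff[OF assms(1)] assms(3) same_cluster_commute by blast
  moreover have "same_cluster N k x y" if "x \<in> N i" "y \<in> N i" for x y
    using that assms(1) unfolding same_cluster_def by blast
  ultimately show ?thesis
    unfolding extend_cluster_def using assms(2) by auto
qed

lemma recovers_if_sample_meets_private_parts:
  assumes sub: "\<And>i. i < k \<Longrightarrow> N i \<subseteq> {0..<n}"
    and covered: "S \<subseteq> (\<Union>i<k. N i)"
    and meets: "\<And>i. i < k \<Longrightarrow> S \<inter> private_part N k i \<noteq> {}"
  shows "recovers N k n S"
proof -
  let ?Q = "same_cluster N k"
  define F\<^sub>0 where "F\<^sub>0 = (\<lambda>i. S \<inter> N i) ` {..<k}"
  have maximal: "\<forall>C\<in>F\<^sub>0. is_maximal_clique ?Q S C"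
  proof
    fix C assume "C \<in> F\<^sub>0"
    then obtain i where i: "i < k" "C = S \<inter> N i" unfolding F\<^sub>0_def by blast
    obtain p where p: "p \<in> S \<inter> private_part N k i" using meets[OF i(1)] by blast
    show "is_maximal_clique ?Q S C"
      using maximal_clique_through_private_iff[OF i(1) p, of C] i(2) by simp
  qed
  have covers: "covers_graph ?Q S F\<^sub>0"
    using covered unfolding covers_graph_def F\<^sub>0_def same_cluster_def by auto
  have least: "F\<^sub>0 \<subseteq> F" if F: "\<forall>C\<in>F. is_maximal_clique ?Q S C" "covers_graph ?Q S F" for F
  proof
    fix C assume "C \<in> F\<^sub>0"
    then obtain i where i: "i < k" "C = S \<inter> N i" unfolding F\<^sub>0_def by blast
    obtain p where p: "p \<in> S \<inter> private_part N k i" using meets[OF i(1)] by blast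
    have "\<forall>x\<in>S. \<exists>C\<in>F. x \<in> C" using F(2) unfolding covers_graph_def by (rule conjunct1)
    then obtain C' where C': "C' \<in> F" "p \<in> C'" using p by blast
    then have "C' = S \<inter> N i"
      using maximal_clique_through_private_iff[OF i(1) p, of C'] F(1) by simp
    then show "C \<in> F" using C'(1) i(2) by simp
  qed
  have extended: "extend_cluster ?Q n S (S \<inter> N i) = N i" if i: "i < k" for i
  proof -
    obtain p where "p \<in> S \<inter> private_part N k i" using meets[OF i] by blast
    then show ?thesis by (rule extend_cluster_trace[where N = N, OF i sub[OF i]])
  qed
  have cover_iff: "maximal_clique_cover ?Q S F \<longleftrightarrow> F = F\<^sub>0" for F
    by (rule maximal_clique_cover_iff_eq[OF maximal covers least])
  have "extend_cluster ?Q n S ` F\<^sub>0 = N ` {..<k}"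
    unfolding F\<^sub>0_def image_image by (rule image_cong) (simp_all add: extended)
  then have "extend_cluster ?Q n S ` F = N ` {..<k}" if "maximal_clique_cover ?Q S F" for F
    using that cover_iff by simp
  moreover have "maximal_clique_cover ?Q S F\<^sub>0" using cover_iff by simp
  ultimately show ?thesis
    unfolding recovers_def by blast
qed

theorem theorem8:
  fixes n k \<Delta> s :: nat and N :: "nat \<Rightarrow> nat set" and \<alpha> :: real
  assumes sub: "\<And>i. i < k \<Longrightarrow> N i \<subseteq> {0..<n}"
    and atleast: "\<And>x. x < n \<Longrightarrow> card {i. i < k \<and> x \<in> N i} \<ge> 1"
    and atmost: "\<And>x. x < n \<Longrightarrow> card {i. i < k \<and> x \<in> N i} \<le> \<Delta>"
    and alpha_pos: "\<alpha> > 0"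
    and priv: "\<And>i. i < k \<Longrightarrow>
          real (card (N i - (\<Union>j\<in>{j. j < k \<and> j \<noteq> i}. N j))) > \<alpha> * real n"
    and s_size: "\<alpha> * real s = ln (real k) + ln (real n)"
    and s_le: "s \<le> n"
  shows "(\<forall>S. S \<subseteq> {0..<n} \<and> card S = s \<longrightarrow>
            card (queries n S) = (s choose 2) + s * (n - s))
       \<and> measure_pmf.prob (pmf_of_set {S. S \<subseteq> {0..<n} \<and> card S = s})
            {S. recovers N k n S} \<ge> 1 - 1 / real n"
proof (intro conjI allI impI)
  fix S assume "S \<subseteq> {0..<n} \<and> card S = s"
  then show "card (queries n S) = (s choose 2) + s * (n - s)"
    using card_queries by blast
next
  let ?p = "pmf_of_set {S. S \<subseteq> {0..<n} \<and> card S = s}"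
  have covered: "{0..<n} \<subseteq> (\<Union>i<k. N i)"
  proof
    fix x assume "x \<in> {0..<n}"
    then have "{i. i < k \<and> x \<in> N i} \<noteq> {}"
      using atleast[of x] by (metis atLeastLessThan_iff card.empty not_one_le_zero)
    then show "x \<in> (\<Union>i<k. N i)" by blast
  qed
  have P: "private_part N k i \<subseteq> {0..<n}" if "i < k" for i
    using sub[OF that] unfolding private_part_def by blast
  have large: "real (card (private_part N k i)) > \<alpha> * real n" if "i < k" for i
    using priv[OF that] unfolding private_part_def .
  have "real k * exp (- \<alpha> * real s) \<le> 1 / real n"
  proof (cases "k = 0")
    case False
    then have "n > 0" using P[of 0] large[of 0] by (cases n) auto
    then have "exp (\<alpha> * real s) = real k * real n"
      using False s_size by (simp add: exp_add)
    then show ?thesis using False by (simp add: exp_minus field_simps)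
  qed simp
  then have "1 - 1 / real n \<le> 1 - real (card {..<k}) * exp (- \<alpha> * real s)" by simp
  also have "\<dots> \<le> measure_pmf.prob ?p
      {S. S \<subseteq> {0..<n} \<and> (\<forall>i\<in>{..<k}. S \<inter> private_part N k i \<noteq> {})}"
    by (rule prob_random_subset_meets_all_ge) (use s_le P large in auto)
  also have "\<dots> \<le> measure_pmf.prob ?p {S. recovers N k n S}"
    using covered by (intro measure_pmf.finite_measure_mono subsetI CollectI
        recovers_if_sample_meets_private_parts[OF sub]) auto
  finally show "measure_pmf.prob ?p {S. recovers N k n S} \<ge> 1 - 1 / real n" by simp
qed

end
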